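(* Let $T$ be a Grothendieck topology on a category $\mathscr{C}$, and let $\mathrm{Uni}(T)$ denote the singleton Grothendieck topology whose coverings are all universal $T$-locally split morphisms. Then: (a) $\mathrm{Uni}(T)\sim T$; in particular every Grothendieck topology is equivalent to a singleton one. (b) For Grothendieck topologies $T_1,T_2$ on $\mathscr{C}$: $T_1\prec T_2$ if and only if $\mathrm{Uni}(T_1)\subset\mathrm{Uni}(T_2)$, and $T_1\sim T_2$ if and only if $\mathrm{Uni}(T_1)=\mathrm{Uni}(T_2)$. (c) If $T$ is singleton, then $T\subset\mathrm{Uni}(T)$. (d) $\mathrm{Uni}(\mathrm{Uni}(T))=\mathrm{Uni}(T)$.
   Context: A Grothendieck topology $T$ on $\mathscr{C}$ assigns to each object $X$ a set of families $(\pi_i:U_i\to X)_{i\in I}$ ("coverings") such that isomorphisms form singleton coverings, coverings of members of a covering compose to coverings, and coverings pull back (pullbacks existing) along arbitrary morphisms to coverings. It is singleton if all coverings have a one-element index set. A morphism is universal if its pullback along every morphism exists. A morphism $\pi:Y\to X$ is $T$-locally split if there is a covering $(\pi_i:U_i\to X)$ and morphisms $\rho_i:U_i\to Y$ with $\pi\circ\rho_i=\pi_i$. $T_1\prec T_2$ means every universal $T_1$-locally split morphism is $T_2$-locally split; $T_1\sim T_2$ means both $T_1\prec T_2$ and $T_2\prec T_1$. $T_1\subset T_2$ means every $T_1$-covering is a $T_2$-covering. *)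

theory Defs
  imports Main
begin

text \<open>A (possibly large) category given by objects, morphisms, domain, codomain,
  composition (comp g f = g after f, meaningful when cod f = dom g) and identities.\<close>

record ('o, 'm) category =
  Obj :: "'o set"
  Mor :: "'m set"
  dom :: "'m \<Rightarrow> 'o"
  cod :: "'m \<Rightarrow> 'o"
  comp :: "'m \<Rightarrow> 'm \<Rightarrow> 'm"
  ident :: "'o \<Rightarrow> 'm"

definition hom :: "('o, 'm) category \<Rightarrow> 'o \<Rightarrow> 'o \<Rightarrow> 'm set" where
  "hom C X Y = {f \<in> Mor C. dom C f = X \<and> cod C f = Y}"

definition is_category :: "('o, 'm) category \<Rightarrow> bool" where
  "is_category C \<longleftrightarrow>
     (\<forall>f \<in> Mor C. dom C f \<in> Obj C \<and> cod C f \<in> Obj C) \<and>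
     (\<forall>X \<in> Obj C. ident C X \<in> hom C X X) \<and>
     (\<forall>f \<in> Mor C. \<forall>g \<in> Mor C. cod C f = dom C g \<longrightarrow>
        comp C g f \<in> hom C (dom C f) (cod C g)) \<and>
     (\<forall>f \<in> Mor C. \<forall>g \<in> Mor C. \<forall>h \<in> Mor C. cod C f = dom C g \<longrightarrow> cod C g = dom C h \<longrightarrow>
        comp C h (comp C g f) = comp C (comp C h g) f) \<and>
     (\<forall>f \<in> Mor C. comp C (ident C (cod C f)) f = f \<and> comp C f (ident C (dom C f)) = f)"

definition is_iso :: "('o, 'm) category \<Rightarrow> 'm \<Rightarrow> bool" where
  "is_iso C f \<longleftrightarrow> f \<in> Mor C \<and> (\<exists>g \<in> hom C (cod C f) (dom C f).
     comp C g f = ident C (dom C f) \<and> comp C f g = ident C (cod C f))"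

text \<open>is_pullback C f g p q: the square with f : U -> X, g : Y -> X,
  p : P -> Y, q : P -> U is a pullback square
  (so p is the pullback of f along g).\<close>
definition is_pullback :: "('o, 'm) category \<Rightarrow> 'm \<Rightarrow> 'm \<Rightarrow> 'm \<Rightarrow> 'm \<Rightarrow> bool" where
  "is_pullback C f g p q \<longleftrightarrow>
     f \<in> Mor C \<and> g \<in> Mor C \<and> cod C f = cod C g \<and>
     p \<in> hom C (dom C p) (dom C g) \<and> q \<in> hom C (dom C p) (dom C f) \<and>
     comp C f q = comp C g p \<and>
     (\<forall>Z \<in> Obj C. \<forall>a \<in> hom C Z (dom C g). \<forall>b \<in> hom C Z (dom C f).
        comp C f b = comp C g a \<longrightarrow>
        (\<exists>!u. u \<in> hom C Z (dom C p) \<and> comp C p u = a \<and> comp C q u = b))"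

definition has_pullback :: "('o, 'm) category \<Rightarrow> 'm \<Rightarrow> 'm \<Rightarrow> bool" where
  "has_pullback C f g \<longleftrightarrow> (\<exists>p q. is_pullback C f g p q)"

text \<open>A coverage assigns to each object X a set of coverings; a covering of X is a
  family of morphisms with codomain X, represented as a set of morphisms.\<close>
type_synonym ('o, 'm) coverage = "'o \<Rightarrow> 'm set set"

definition is_topology :: "('o, 'm) category \<Rightarrow> ('o, 'm) coverage \<Rightarrow> bool" where
  "is_topology C T \<longleftrightarrow>
     (\<forall>X F. F \<in> T X \<longrightarrow> X \<in> Obj C \<and> (\<forall>f \<in> F. f \<in> Mor C \<and> cod C f = X)) \<and>
     (\<forall>f. is_iso C f \<longrightarrow> {f} \<in> T (cod C f)) \<and>
     (\<forall>X F G. F \<in> T X \<longrightarrow> (\<forall>f \<in> F. G f \<in> T (dom C f)) \<longrightarrow>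
        {comp C f h | f h. f \<in> F \<and> h \<in> G f} \<in> T X) \<and>
     (\<forall>X F g. F \<in> T X \<longrightarrow> g \<in> Mor C \<longrightarrow> cod C g = X \<longrightarrow>
        (\<forall>f \<in> F. has_pullback C f g) \<and>
        (\<forall>p q. (\<forall>f \<in> F. is_pullback C f g (p f) (q f)) \<longrightarrow> p ` F \<in> T (dom C g)))"

definition singleton_cov :: "('o, 'm) coverage \<Rightarrow> bool" where
  "singleton_cov T \<longleftrightarrow> (\<forall>X F. F \<in> T X \<longrightarrow> (\<exists>f. F = {f}))"

definition universal :: "('o, 'm) category \<Rightarrow> 'm \<Rightarrow> bool" where
  "universal C \<pi> \<longleftrightarrow> \<pi> \<in> Mor C \<and> (\<forall>g \<in> Mor C. cod C g = cod C \<pi> \<longrightarrow> has_pullback C \<pi> g)"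

definition locally_split :: "('o, 'm) category \<Rightarrow> ('o, 'm) coverage \<Rightarrow> 'm \<Rightarrow> bool" where
  "locally_split C T \<pi> \<longleftrightarrow> \<pi> \<in> Mor C \<and>
     (\<exists>F \<in> T (cod C \<pi>). \<forall>f \<in> F. \<exists>\<rho> \<in> hom C (dom C f) (dom C \<pi>). comp C \<pi> \<rho> = f)"

definition Uni :: "('o, 'm) category \<Rightarrow> ('o, 'm) coverage \<Rightarrow> ('o, 'm) coverage" where
  "Uni C T X = {{\<pi>} | \<pi>. \<pi> \<in> Mor C \<and> cod C \<pi> = X \<and> universal C \<pi> \<and> locally_split C T \<pi>}"

definition top_prec :: "('o, 'm) category \<Rightarrow> ('o, 'm) coverage \<Rightarrow> ('o, 'm) coverage \<Rightarrow> bool" where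
  "top_prec C T1 T2 \<longleftrightarrow> (\<forall>\<pi>. universal C \<pi> \<and> locally_split C T1 \<pi> \<longrightarrow> locally_split C T2 \<pi>)"

definition top_equiv :: "('o, 'm) category \<Rightarrow> ('o, 'm) coverage \<Rightarrow> ('o, 'm) coverage \<Rightarrow> bool" where
  "top_equiv C T1 T2 \<longleftrightarrow> top_prec C T1 T2 \<and> top_prec C T2 T1"

definition top_subset :: "('o, 'm) coverage \<Rightarrow> ('o, 'm) coverage \<Rightarrow> bool" where
  "top_subset T1 T2 \<longleftrightarrow> (\<forall>X. T1 X \<subseteq> T2 X)"

end

theory Submission
  imports Defs
begin

text \<open>Everything rests on comparing locally split morphisms for \<open>T\<close> and for \<open>Uni(T)\<close>.
  If a universal \<open>\<pi>\<close> is \<open>Uni(T)\<close>-locally split, then some universal \<open>T\<close>-locally split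
  \<open>\<sigma>\<close> factors as \<open>\<pi> \<rho>\<close>, and local splitness passes from a composite to its left factor;
  conversely \<open>{\<pi>}\<close> is itself a \<open>Uni(T)\<close>-covering. So \<open>T\<close> and \<open>Uni(T)\<close> have the same
  universal locally split morphisms, which is (d) and, after unfolding the definitions, (a) and (b).
  Singleton coverings are universal because coverings pull back, and are split by the identity, which
  gives (c). Finally \<open>Uni(T)\<close> is a topology because universal morphisms and \<open>T\<close>-locally split
  morphisms are both stable under composition and pullback: for universality this is the pasting
  lemma for pullback squares; for local splitness one pulls the splitting coverings back along the
  local sections and composes them with the composition axiom of \<open>T\<close>.\<close>

lemma singleton_in_Uni_iff [simp]:
  "{\<pi>} \<in> Uni C T X \<longleftrightarrow> cod C \<pi> = X \<and> universal C \<pi> \<and> locally_split C T \<pi>"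
  by (auto simp: Uni_def universal_def)

lemma in_UniE:
  assumes "F \<in> Uni C T X"
  obtains \<pi> where "F = {\<pi>}" "cod C \<pi> = X" "universal C \<pi>" "locally_split C T \<pi>"
  using assms by (auto simp: Uni_def)

lemma singleton_cov_Uni: "singleton_cov (Uni C T)"
  by (auto simp: singleton_cov_def elim: in_UniE)

lemma top_prec_iff_top_subset_Uni: "top_prec C T1 T2 \<longleftrightarrow> top_subset (Uni C T1) (Uni C T2)"
proof
  assume "top_prec C T1 T2"
  then show "top_subset (Uni C T1) (Uni C T2)"
    unfolding top_prec_def top_subset_def by (auto elim!: in_UniE)
next
  assume sub: "top_subset (Uni C T1) (Uni C T2)"
  show "top_prec C T1 T2"
    unfolding top_prec_def
  proof (intro allI impI)
    fix \<pi>
    assume "universal C \<pi> \<and> locally_split C T1 \<pi>"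
    then have "{\<pi>} \<in> Uni C T1 (cod C \<pi>)"
      by simp
    then have "{\<pi>} \<in> Uni C T2 (cod C \<pi>)"
      using sub unfolding top_subset_def by blast
    then show "locally_split C T2 \<pi>"
      by simp
  qed
qed

lemma top_equiv_iff_Uni_eq: "top_equiv C T1 T2 \<longleftrightarrow> Uni C T1 = Uni C T2"
  unfolding top_equiv_def top_prec_iff_top_subset_Uni top_subset_def fun_eq_iff by blast

locale cat =
  fixes C :: "('o, 'm) category"
  assumes is_category: "is_category C"
begin

abbreviation after :: "'m \<Rightarrow> 'm \<Rightarrow> 'm" (infixr "\<cdot>" 70)
  where "g \<cdot> f \<equiv> comp C g f"

lemma dom_in_Obj: "f \<in> hom C A B \<Longrightarrow> A \<in> Obj C"
  and cod_in_Obj: "f \<in> hom C A B \<Longrightarrow> B \<in> Obj C"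
  using is_category by (auto simp: is_category_def hom_def)

lemma comp_in_hom: "f \<in> hom C A B \<Longrightarrow> g \<in> hom C B D \<Longrightarrow> g \<cdot> f \<in> hom C A D"
  using is_category by (auto simp: is_category_def hom_def)

lemma comp_assoc:
  "f \<in> hom C A B \<Longrightarrow> g \<in> hom C B D \<Longrightarrow> h \<in> hom C D E \<Longrightarrow> h \<cdot> (g \<cdot> f) = (h \<cdot> g) \<cdot> f"
  using is_category by (auto simp: is_category_def hom_def)

lemma ident_in_hom: "f \<in> Mor C \<Longrightarrow> ident C (dom C f) \<in> hom C (dom C f) (dom C f)"
  using is_category by (auto simp: is_category_def)

lemma comp_ident_right: "f \<in> Mor C \<Longrightarrow> f \<cdot> ident C (dom C f) = f"
  using is_category by (auto simp: is_category_def)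

section \<open>Pullback squares\<close>

lemma pullback_square:
  assumes "is_pullback C f g p q"
  shows "f \<in> hom C (dom C f) (cod C f)" "g \<in> hom C (dom C g) (cod C f)"
    "p \<in> hom C (dom C p) (dom C g)" "q \<in> hom C (dom C p) (dom C f)" "f \<cdot> q = g \<cdot> p"
  using assms by (auto simp: is_pullback_def hom_def)

lemma pullback_ex1_lift:
  assumes "is_pullback C f g p q" "a \<in> hom C Z (dom C g)" "b \<in> hom C Z (dom C f)" "f \<cdot> b = g \<cdot> a"
  shows "\<exists>!u. u \<in> hom C Z (dom C p) \<and> p \<cdot> u = a \<and> q \<cdot> u = b"
  using assms dom_in_Obj[OF assms(2)] unfolding is_pullback_def by simp

lemma pullback_lift:
  assumes "is_pullback C f g p q" "a \<in> hom C Z (dom C g)" "b \<in> hom C Z (dom C f)" "f \<cdot> b = g \<cdot> a"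
  obtains u where "u \<in> hom C Z (dom C p)" "p \<cdot> u = a" "q \<cdot> u = b"
  using pullback_ex1_lift[OF assms] by blast

lemma pullback_jointly_monic:
  assumes pb: "is_pullback C f g p q"
    and u: "u \<in> hom C Z (dom C p)" and u': "u' \<in> hom C Z (dom C p)"
    and "p \<cdot> u = p \<cdot> u'" "q \<cdot> u = q \<cdot> u'"
  shows "u = u'"
proof -
  note sq = pullback_square[OF pb]
  have "f \<cdot> (q \<cdot> u) = g \<cdot> (p \<cdot> u)"
    using comp_assoc[OF u sq(4,1)] comp_assoc[OF u sq(3,2)] sq(5) by simp
  then have "\<exists>!v. v \<in> hom C Z (dom C p) \<and> p \<cdot> v = p \<cdot> u \<and> q \<cdot> v = q \<cdot> u"
    by (rule pullback_ex1_lift[OF pb comp_in_hom[OF u sq(3)] comp_in_hom[OF u sq(4)]])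
  then show ?thesis
    using u u' assms(4,5) by (metis (no_types, lifting))
qed

lemma is_pullbackI:
  assumes "f \<in> Mor C" "g \<in> Mor C" "cod C f = cod C g"
    and "p \<in> hom C P (dom C g)" "q \<in> hom C P (dom C f)" "f \<cdot> q = g \<cdot> p"
    and lift: "\<And>Z a b. a \<in> hom C Z (dom C g) \<Longrightarrow> b \<in> hom C Z (dom C f) \<Longrightarrow> f \<cdot> b = g \<cdot> a \<Longrightarrow>
      \<exists>u \<in> hom C Z P. p \<cdot> u = a \<and> q \<cdot> u = b"
    and monic: "\<And>Z u u'. u \<in> hom C Z P \<Longrightarrow> u' \<in> hom C Z P \<Longrightarrow>
      p \<cdot> u = p \<cdot> u' \<Longrightarrow> q \<cdot> u = q \<cdot> u' \<Longrightarrow> u = u'"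
  shows "is_pullback C f g p q"
proof -
  have P: "dom C p = P"
    using assms(4) by (simp add: hom_def)
  have "\<exists>!u. u \<in> hom C Z P \<and> p \<cdot> u = a \<and> q \<cdot> u = b"
    if "a \<in> hom C Z (dom C g)" "b \<in> hom C Z (dom C f)" "f \<cdot> b = g \<cdot> a" for Z a b
    using lift[OF that] monic by (metis (no_types, lifting))
  then show ?thesis
    unfolding is_pullback_def P using assms(1-6) by simp
qed

lemma pullback_paste_lift:
  assumes pb1: "is_pullback C \<pi> g p q" and pb2: "is_pullback C \<sigma> q p' q'"
    and a: "a \<in> hom C Z (dom C g)" and b: "b \<in> hom C Z (dom C \<sigma>)" and ab: "\<pi> \<cdot> (\<sigma> \<cdot> b) = g \<cdot> a"
  obtains u where "u \<in> hom C Z (dom C p')" "(p \<cdot> p') \<cdot> u = a" "q' \<cdot> u = b"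
proof -
  note sq1 = pullback_square[OF pb1] and sq2 = pullback_square[OF pb2]
  have \<sigma>: "\<sigma> \<in> hom C (dom C \<sigma>) (dom C \<pi>)" and p': "p' \<in> hom C (dom C p') (dom C p)"
    using sq2 sq1(4) by (simp_all add: hom_def)
  obtain v where v: "v \<in> hom C Z (dom C p)" "p \<cdot> v = a" "q \<cdot> v = \<sigma> \<cdot> b"
    using pullback_lift[OF pb1 a comp_in_hom[OF b \<sigma>] ab] by blast
  moreover have "v \<in> hom C Z (dom C q)"
    using v(1) sq1(4) by (simp add: hom_def)
  ultimately obtain u where u: "u \<in> hom C Z (dom C p')" "p' \<cdot> u = v" "q' \<cdot> u = b"
    using pullback_lift[OF pb2 _ b] by metis
  then show thesis
    using that comp_assoc[OF u(1) p' sq1(3)] v(2) by simp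
qed

lemma pullback_paste:
  assumes pb1: "is_pullback C \<pi> g p q" and pb2: "is_pullback C \<sigma> q p' q'"
  shows "is_pullback C (\<pi> \<cdot> \<sigma>) g (p \<cdot> p') q'"
proof -
  note sq1 = pullback_square[OF pb1] and sq2 = pullback_square[OF pb2]
  note \<pi> = sq1(1) and g = sq1(2) and p = sq1(3) and q = sq1(4) and q' = sq2(4)
  have \<sigma>: "\<sigma> \<in> hom C (dom C \<sigma>) (dom C \<pi>)" and p': "p' \<in> hom C (dom C p') (dom C p)"
    using sq2 q by (simp_all add: hom_def)
  have \<pi>\<sigma>: "\<pi> \<cdot> \<sigma> \<in> hom C (dom C \<sigma>) (cod C \<pi>)"
    using \<sigma> \<pi> by (rule comp_in_hom)
  show ?thesis
  proof (rule is_pullbackI)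
    show "(\<pi> \<cdot> \<sigma>) \<cdot> q' = g \<cdot> (p \<cdot> p')"
      using comp_assoc[OF q' \<sigma> \<pi>] comp_assoc[OF p' q \<pi>] comp_assoc[OF p' p g] sq1(5) sq2(5)
      by simp
  next
    fix Z a b
    assume "a \<in> hom C Z (dom C g)" "b \<in> hom C Z (dom C (\<pi> \<cdot> \<sigma>))" "(\<pi> \<cdot> \<sigma>) \<cdot> b = g \<cdot> a"
    moreover from this have "b \<in> hom C Z (dom C \<sigma>)"
      using \<pi>\<sigma> by (simp add: hom_def)
    ultimately show "\<exists>u \<in> hom C Z (dom C p'). (p \<cdot> p') \<cdot> u = a \<and> q' \<cdot> u = b"
      using pullback_paste_lift[OF pb1 pb2] comp_assoc[OF _ \<sigma> \<pi>] by metis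
  next
    fix Z u u'
    assume u: "u \<in> hom C Z (dom C p')" and u': "u' \<in> hom C Z (dom C p')"
      and "(p \<cdot> p') \<cdot> u = (p \<cdot> p') \<cdot> u'" and q'u: "q' \<cdot> u = q' \<cdot> u'"
    then have "p \<cdot> (p' \<cdot> u) = p \<cdot> (p' \<cdot> u')"
      using comp_assoc[OF u p' p] comp_assoc[OF u' p' p] by simp
    moreover have "q \<cdot> (p' \<cdot> u) = q \<cdot> (p' \<cdot> u')"
      using comp_assoc[OF u p' q] comp_assoc[OF u' p' q] comp_assoc[OF u q' \<sigma>]
        comp_assoc[OF u' q' \<sigma>] sq2(5) q'u by metis
    ultimately have "p' \<cdot> u = p' \<cdot> u'"
      using pullback_jointly_monic[OF pb1] comp_in_hom[OF u p'] comp_in_hom[OF u' p'] by blast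
    then show "u = u'"
      using pullback_jointly_monic[OF pb2 u u'] q'u by blast
  qed (use \<pi>\<sigma> g comp_in_hom[OF p' p] q' in \<open>auto simp: hom_def\<close>)
qed

lemma pullback_left_square:
  assumes pb: "is_pullback C \<pi> g p q" and h: "h \<in> hom C (dom C h) (dom C g)"
    and pb': "is_pullback C \<pi> (g \<cdot> h) p' q'"
    and u: "u \<in> hom C (dom C p') (dom C p)" "p \<cdot> u = h \<cdot> p'" "q \<cdot> u = q'"
  shows "is_pullback C p h p' u"
proof -
  note sq = pullback_square[OF pb] and sq' = pullback_square[OF pb']
  note \<pi> = sq(1) and g = sq(2) and p = sq(3) and q = sq(4)
  have gh: "g \<cdot> h \<in> hom C (dom C h) (cod C \<pi>)"
    using h g by (rule comp_in_hom)
  have p': "p' \<in> hom C (dom C p') (dom C h)"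
    using sq' gh by (simp add: hom_def)
  show ?thesis
  proof (rule is_pullbackI)
    fix W a b
    assume a: "a \<in> hom C W (dom C h)" and b: "b \<in> hom C W (dom C p)" and ab: "p \<cdot> b = h \<cdot> a"
    have "\<pi> \<cdot> (q \<cdot> b) = (g \<cdot> h) \<cdot> a"
      using comp_assoc[OF b q \<pi>] comp_assoc[OF b p g] comp_assoc[OF a h g] sq(5) ab by simp
    then obtain w where w: "w \<in> hom C W (dom C p')" "p' \<cdot> w = a" "q' \<cdot> w = q \<cdot> b"
      using pullback_lift[OF pb' _ comp_in_hom[OF b q]] a gh by (auto simp: hom_def)
    have "p \<cdot> (u \<cdot> w) = p \<cdot> b"
      using comp_assoc[OF w(1) u(1) p] comp_assoc[OF w(1) p' h] u(2) w(2) ab by simp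
    moreover have "q \<cdot> (u \<cdot> w) = q \<cdot> b"
      using comp_assoc[OF w(1) u(1) q] u(3) w(3) by simp
    ultimately have "u \<cdot> w = b"
      using pullback_jointly_monic[OF pb comp_in_hom[OF w(1) u(1)] b] by blast
    then show "\<exists>w \<in> hom C W (dom C p'). p' \<cdot> w = a \<and> u \<cdot> w = b"
      using w by blast
  next
    fix W w w'
    assume w: "w \<in> hom C W (dom C p')" and w': "w' \<in> hom C W (dom C p')"
      and "p' \<cdot> w = p' \<cdot> w'" "u \<cdot> w = u \<cdot> w'"
    moreover have "q' \<cdot> w = q' \<cdot> w'"
      using comp_assoc[OF w u(1) q] comp_assoc[OF w' u(1) q] u(3) \<open>u \<cdot> w = u \<cdot> w'\<close> by simp
    ultimately show "w = w'"
      using pullback_jointly_monic[OF pb'] by blast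
  qed (use p h p' u in \<open>auto simp: hom_def\<close>)
qed

lemma has_pullback_of_pullback:
  assumes pb: "is_pullback C \<pi> g p q" and h: "h \<in> hom C (dom C h) (dom C g)"
    and pb': "is_pullback C \<pi> (g \<cdot> h) p' q'"
  shows "has_pullback C p h"
proof -
  note sq = pullback_square[OF pb] and sq' = pullback_square[OF pb']
  have p': "p' \<in> hom C (dom C p') (dom C h)"
    using sq' comp_in_hom[OF h sq(2)] by (simp add: hom_def)
  have "\<pi> \<cdot> q' = g \<cdot> (h \<cdot> p')"
    using sq'(5) comp_assoc[OF p' h sq(2)] by simp
  then obtain u where "u \<in> hom C (dom C p') (dom C p)" "p \<cdot> u = h \<cdot> p'" "q \<cdot> u = q'"
    using pullback_lift[OF pb comp_in_hom[OF p' h] sq'(4)] by blast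
  then show ?thesis
    using pullback_left_square[OF pb h pb'] unfolding has_pullback_def by blast
qed

section \<open>Universal and locally split morphisms\<close>

lemma universal_pullback:
  assumes u: "universal C \<pi>" and pb: "is_pullback C \<pi> g p q"
  shows "universal C p"
  unfolding universal_def
proof (intro conjI ballI impI)
  note sq = pullback_square[OF pb]
  show "p \<in> Mor C"
    using sq(3) by (simp add: hom_def)
  fix h
  assume "h \<in> Mor C" "cod C h = cod C p"
  then have h: "h \<in> hom C (dom C h) (dom C g)"
    using sq(3) by (simp add: hom_def)
  have "has_pullback C \<pi> (g \<cdot> h)"
    using u comp_in_hom[OF h sq(2)] by (auto simp: universal_def hom_def)
  then show "has_pullback C p h"
    using has_pullback_of_pullback[OF pb h] unfolding has_pullback_def by blast
qed

lemma universal_comp: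
  assumes u\<pi>: "universal C \<pi>" and u\<sigma>: "universal C \<sigma>" and "cod C \<sigma> = dom C \<pi>"
  shows "universal C (\<pi> \<cdot> \<sigma>)"
proof -
  have \<pi>\<sigma>: "\<pi> \<cdot> \<sigma> \<in> hom C (dom C \<sigma>) (cod C \<pi>)"
    using assms comp_in_hom by (auto simp: universal_def hom_def)
  show ?thesis
    unfolding universal_def
  proof (intro conjI ballI impI)
    show "\<pi> \<cdot> \<sigma> \<in> Mor C"
      using \<pi>\<sigma> by (simp add: hom_def)
    fix g
    assume "g \<in> Mor C" "cod C g = cod C (\<pi> \<cdot> \<sigma>)"
    then obtain p q where pb: "is_pullback C \<pi> g p q"
      using u\<pi> \<pi>\<sigma> by (auto simp: universal_def hom_def has_pullback_def)
    moreover obtain p' q' where "is_pullback C \<sigma> q p' q'"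
      using u\<sigma> pullback_square(4)[OF pb] assms(3) by (auto simp: universal_def hom_def has_pullback_def)
    ultimately show "has_pullback C (\<pi> \<cdot> \<sigma>) g"
      using pullback_paste unfolding has_pullback_def by blast
  qed
qed

lemma locally_split_if_singleton_covering:
  assumes "\<pi> \<in> Mor C" "{\<pi>} \<in> T (cod C \<pi>)"
  shows "locally_split C T \<pi>"
  unfolding locally_split_def
proof (intro conjI bexI[of _ "{\<pi>}"] ballI)
  fix f
  assume "f \<in> {\<pi>}"
  then show "\<exists>\<rho>\<in>hom C (dom C f) (dom C \<pi>). \<pi> \<cdot> \<rho> = f"
    using ident_in_hom[OF assms(1)] comp_ident_right[OF assms(1)] by auto
qed (fact assms)+

lemma locally_split_of_comp:
  assumes ls: "locally_split C T (\<pi> \<cdot> \<rho>)" and \<pi>: "\<pi> \<in> hom C (dom C \<pi>) (cod C \<pi>)"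
    and \<rho>: "\<rho> \<in> hom C A (dom C \<pi>)"
  shows "locally_split C T \<pi>"
proof -
  have \<pi>\<rho>: "\<pi> \<cdot> \<rho> \<in> hom C A (cod C \<pi>)"
    using \<rho> \<pi> by (rule comp_in_hom)
  then have "\<exists>F\<in>T (cod C \<pi>). \<forall>f\<in>F. \<exists>\<tau>\<in>hom C (dom C f) A. (\<pi> \<cdot> \<rho>) \<cdot> \<tau> = f"
    using ls unfolding locally_split_def by (simp add: hom_def)
  then obtain F where F: "F \<in> T (cod C \<pi>)" and split: "\<forall>f\<in>F. \<exists>\<tau>\<in>hom C (dom C f) A. (\<pi> \<cdot> \<rho>) \<cdot> \<tau> = f"
    by (elim bexE)
  show ?thesis
    unfolding locally_split_def
  proof (intro conjI bexI[of _ F] ballI)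
    show "\<pi> \<in> Mor C"
      using \<pi> by (simp add: hom_def)
    fix f
    assume "f \<in> F"
    then obtain \<tau> where \<tau>: "\<tau> \<in> hom C (dom C f) A" "(\<pi> \<cdot> \<rho>) \<cdot> \<tau> = f"
      using split by blast
    then have "\<pi> \<cdot> (\<rho> \<cdot> \<tau>) = f"
      using comp_assoc[OF \<tau>(1) \<rho> \<pi>] by simp
    then show "\<exists>\<tau>'\<in>hom C (dom C f) (dom C \<pi>). \<pi> \<cdot> \<tau>' = f"
      using comp_in_hom[OF \<tau>(1) \<rho>] by blast
  qed (fact F)
qed

lemma locally_split_Uni_iff:
  assumes u: "universal C \<pi>"
  shows "locally_split C (Uni C T) \<pi> \<longleftrightarrow> locally_split C T \<pi>"
proof
  have \<pi>: "\<pi> \<in> hom C (dom C \<pi>) (cod C \<pi>)"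
    using u by (simp add: universal_def hom_def)
  assume "locally_split C (Uni C T) \<pi>"
  then obtain F where F: "F \<in> Uni C T (cod C \<pi>)"
    and split: "\<forall>f\<in>F. \<exists>\<rho>\<in>hom C (dom C f) (dom C \<pi>). \<pi> \<cdot> \<rho> = f"
    unfolding locally_split_def by blast
  obtain \<sigma> where \<sigma>: "F = {\<sigma>}" "locally_split C T \<sigma>"
    using F by (rule in_UniE)
  then obtain \<rho> where "\<rho> \<in> hom C (dom C \<sigma>) (dom C \<pi>)" "\<pi> \<cdot> \<rho> = \<sigma>"
    using split by blast
  then show "locally_split C T \<pi>"
    using locally_split_of_comp[OF _ \<pi>] \<sigma>(2) by blast
next
  assume "locally_split C T \<pi>"
  then have "{\<pi>} \<in> Uni C T (cod C \<pi>)"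
    using u by simp
  then show "locally_split C (Uni C T) \<pi>"
    using locally_split_if_singleton_covering u by (simp add: universal_def)
qed

lemma Uni_covering_morphisms: "F \<in> Uni C T X \<Longrightarrow> X \<in> Obj C \<and> (\<forall>f\<in>F. f \<in> Mor C \<and> cod C f = X)"
  by (auto elim!: in_UniE simp: universal_def hom_def intro: cod_in_Obj)

lemma Uni_Uni: "Uni C (Uni C T) = Uni C T"
proof -
  have "universal C \<pi> \<and> locally_split C (Uni C T) \<pi> \<longleftrightarrow> universal C \<pi> \<and> locally_split C T \<pi>" for \<pi>
    using locally_split_Uni_iff by blast
  then show ?thesis
    unfolding Uni_def by simp
qed

end

section \<open>The singleton topology of universal locally split morphisms\<close>

locale grothendieck_topology = cat C for C :: "('o, 'm) category" +
  fixes T :: "('o, 'm) coverage"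
  assumes is_topology: "is_topology C T"
begin

lemma covering_in_hom: "F \<in> T X \<Longrightarrow> f \<in> F \<Longrightarrow> f \<in> hom C (dom C f) X"
  using is_topology[unfolded is_topology_def, THEN conjunct1] by (simp add: hom_def)

lemma iso_covering: "is_iso C f \<Longrightarrow> {f} \<in> T (cod C f)"
  using is_topology[unfolded is_topology_def, THEN conjunct2, THEN conjunct1] by blast

lemma covering_comp:
  assumes "F \<in> T X" "\<And>f. f \<in> F \<Longrightarrow> G f \<in> T (dom C f)"
  shows "{f \<cdot> h | f h. f \<in> F \<and> h \<in> G f} \<in> T X"
  using is_topology[unfolded is_topology_def, THEN conjunct2, THEN conjunct2, THEN conjunct1] assms
  by blast

lemma covering_has_pullback:
  "F \<in> T X \<Longrightarrow> f \<in> F \<Longrightarrow> g \<in> hom C (dom C g) X \<Longrightarrow> has_pullback C f g"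
  using is_topology[unfolded is_topology_def, THEN conjunct2, THEN conjunct2, THEN conjunct2]
  by (simp add: hom_def)

lemma covering_pullback:
  assumes F: "F \<in> T X" and g: "g \<in> hom C (dom C g) X"
  obtains p q where "\<And>f. f \<in> F \<Longrightarrow> is_pullback C f g (p f) (q f)" "p ` F \<in> T (dom C g)"
proof -
  have "\<forall>f\<in>F. \<exists>p q. is_pullback C f g p q"
    using covering_has_pullback[OF F _ g] unfolding has_pullback_def by blast
  then obtain p where "\<forall>f\<in>F. \<exists>q. is_pullback C f g (p f) q"
    by metis
  then obtain q where pb: "\<forall>f\<in>F. is_pullback C f g (p f) (q f)"
    by metis
  moreover have "p ` F \<in> T (dom C g)"
    using is_topology[unfolded is_topology_def, THEN conjunct2, THEN conjunct2, THEN conjunct2]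
      F g pb unfolding hom_def by blast
  ultimately show ?thesis
    using that by blast
qed

lemma singleton_covering_in_Uni:
  assumes "{f} \<in> T X"
  shows "{f} \<in> Uni C T X"
proof -
  have f: "f \<in> hom C (dom C f) X"
    using covering_in_hom assms by blast
  have "universal C f"
    using f covering_has_pullback[OF assms] by (auto simp: universal_def hom_def)
  moreover have "locally_split C T f"
    using locally_split_if_singleton_covering f assms by (simp add: hom_def)
  ultimately show ?thesis
    using f by (simp add: hom_def)
qed

lemma top_subset_Uni_if_singleton_cov:
  assumes "singleton_cov T"
  shows "top_subset T (Uni C T)"
  unfolding top_subset_def
proof (intro allI subsetI)
  fix X F
  assume "F \<in> T X"
  moreover obtain f where "F = {f}"
    using assms calculation unfolding singleton_cov_def by blast
  ultimately show "F \<in> Uni C T X"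
    using singleton_covering_in_Uni by blast
qed

lemma locally_split_lifts_locally:
  assumes ls: "locally_split C T \<sigma>" and \<rho>: "\<rho> \<in> hom C A (cod C \<sigma>)"
  shows "\<exists>G\<in>T A. \<forall>k\<in>G. \<exists>t\<in>hom C (dom C k) (dom C \<sigma>). \<sigma> \<cdot> t = \<rho> \<cdot> k"
proof -
  obtain F where F: "F \<in> T (cod C \<sigma>)"
    and split: "\<forall>f\<in>F. \<exists>\<tau>\<in>hom C (dom C f) (dom C \<sigma>). \<sigma> \<cdot> \<tau> = f"
    using ls unfolding locally_split_def by blast
  have \<sigma>: "\<sigma> \<in> hom C (dom C \<sigma>) (cod C \<sigma>)"
    using ls by (simp add: locally_split_def hom_def)
  have A: "dom C \<rho> = A"
    using \<rho> by (simp add: hom_def)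
  obtain p q where pb: "\<And>f. f \<in> F \<Longrightarrow> is_pullback C f \<rho> (p f) (q f)" and cov: "p ` F \<in> T A"
    using covering_pullback[OF F] \<rho> A by metis
  have "\<exists>t\<in>hom C (dom C k) (dom C \<sigma>). \<sigma> \<cdot> t = \<rho> \<cdot> k" if k: "k \<in> p ` F" for k
  proof -
    obtain f where f: "f \<in> F" "k = p f"
      using k by blast
    obtain \<tau> where \<tau>: "\<tau> \<in> hom C (dom C f) (dom C \<sigma>)" "\<sigma> \<cdot> \<tau> = f"
      using split f(1) by blast
    note sq = pullback_square[OF pb[OF f(1)]]
    have "\<sigma> \<cdot> (\<tau> \<cdot> q f) = \<rho> \<cdot> p f"
      using comp_assoc[OF sq(4) \<tau>(1) \<sigma>] \<tau>(2) sq(5) by simp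
    then show ?thesis
      using comp_in_hom[OF sq(4) \<tau>(1)] f(2) by blast
  qed
  then show ?thesis
    using cov by blast
qed

lemma locally_split_pullback:
  assumes ls: "locally_split C T \<pi>" and pb: "is_pullback C \<pi> g p q"
  shows "locally_split C T p"
proof -
  note sq = pullback_square[OF pb]
  obtain G where G: "G \<in> T (dom C g)"
    and lift: "\<forall>k\<in>G. \<exists>t\<in>hom C (dom C k) (dom C \<pi>). \<pi> \<cdot> t = g \<cdot> k"
    using locally_split_lifts_locally[OF ls sq(2)] by blast
  show ?thesis
    unfolding locally_split_def
  proof (intro conjI bexI[of _ G] ballI)
    show "p \<in> Mor C" "G \<in> T (cod C p)"
      using sq(3) G by (simp_all add: hom_def)
    fix k
    assume k: "k \<in> G"
    then obtain t where t: "t \<in> hom C (dom C k) (dom C \<pi>)" "\<pi> \<cdot> t = g \<cdot> k"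
      using lift by blast
    have "k \<in> hom C (dom C k) (dom C g)"
      using covering_in_hom[OF G k] .
    then obtain u where "u \<in> hom C (dom C k) (dom C p)" "p \<cdot> u = k"
      using pullback_lift[OF pb _ t] by blast
    then show "\<exists>u\<in>hom C (dom C k) (dom C p). p \<cdot> u = k"
      by blast
  qed
qed

lemma locally_split_if_locally_factors:
  assumes \<pi>: "\<pi> \<in> Mor C" and F: "F \<in> T (cod C \<pi>)" and G: "\<And>f. f \<in> F \<Longrightarrow> G f \<in> T (dom C f)"
    and factor: "\<And>f k. f \<in> F \<Longrightarrow> k \<in> G f \<Longrightarrow> \<exists>t\<in>hom C (dom C k) (dom C \<pi>). \<pi> \<cdot> t = f \<cdot> k"
  shows "locally_split C T \<pi>"
  unfolding locally_split_def
proof (intro conjI bexI[of _ "{f \<cdot> k | f k. f \<in> F \<and> k \<in> G f}"] ballI)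
  show "{f \<cdot> k | f k. f \<in> F \<and> k \<in> G f} \<in> T (cod C \<pi>)"
    using covering_comp[OF F G] .
  fix h
  assume "h \<in> {f \<cdot> k | f k. f \<in> F \<and> k \<in> G f}"
  then obtain f k where h: "h = f \<cdot> k" "f \<in> F" "k \<in> G f"
    by blast
  have "dom C h = dom C k"
    using comp_in_hom[OF covering_in_hom[OF G[OF h(2)] h(3)] covering_in_hom[OF F h(2)]] h(1)
    by (simp add: hom_def)
  then show "\<exists>t\<in>hom C (dom C h) (dom C \<pi>). \<pi> \<cdot> t = h"
    using factor[OF h(2,3)] h(1) by simp
qed (fact \<pi>)

lemma locally_split_comp:
  assumes l\<pi>: "locally_split C T \<pi>" and l\<sigma>: "locally_split C T \<sigma>" and "cod C \<sigma> = dom C \<pi>"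
  shows "locally_split C T (\<pi> \<cdot> \<sigma>)"
proof -
  have \<pi>: "\<pi> \<in> hom C (dom C \<pi>) (cod C \<pi>)" and \<sigma>: "\<sigma> \<in> hom C (dom C \<sigma>) (dom C \<pi>)"
    using assms by (simp_all add: locally_split_def hom_def)
  have \<pi>\<sigma>: "\<pi> \<cdot> \<sigma> \<in> hom C (dom C \<sigma>) (cod C \<pi>)"
    using \<sigma> \<pi> by (rule comp_in_hom)
  obtain F where F: "F \<in> T (cod C \<pi>)" and "\<forall>f\<in>F. \<exists>\<rho>\<in>hom C (dom C f) (dom C \<pi>). \<pi> \<cdot> \<rho> = f"
    using l\<pi> unfolding locally_split_def by blast
  then obtain \<rho> where \<rho>: "\<And>f. f \<in> F \<Longrightarrow> \<rho> f \<in> hom C (dom C f) (dom C \<pi>)" "\<And>f. f \<in> F \<Longrightarrow> \<pi> \<cdot> \<rho> f = f"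
    by metis
  have "\<forall>f\<in>F. \<exists>G\<in>T (dom C f). \<forall>k\<in>G. \<exists>t\<in>hom C (dom C k) (dom C \<sigma>). \<sigma> \<cdot> t = \<rho> f \<cdot> k"
    using locally_split_lifts_locally[OF l\<sigma>] \<rho>(1) assms(3) by simp
  then obtain G where G: "\<And>f. f \<in> F \<Longrightarrow> G f \<in> T (dom C f)"
    and lift: "\<And>f k. f \<in> F \<Longrightarrow> k \<in> G f \<Longrightarrow> \<exists>t\<in>hom C (dom C k) (dom C \<sigma>). \<sigma> \<cdot> t = \<rho> f \<cdot> k"
    by metis
  have "\<exists>t\<in>hom C (dom C k) (dom C (\<pi> \<cdot> \<sigma>)). (\<pi> \<cdot> \<sigma>) \<cdot> t = f \<cdot> k" if f: "f \<in> F" and k: "k \<in> G f" for f k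
  proof -
    obtain t where t: "t \<in> hom C (dom C k) (dom C \<sigma>)" "\<sigma> \<cdot> t = \<rho> f \<cdot> k"
      using lift[OF f k] by blast
    have "(\<pi> \<cdot> \<sigma>) \<cdot> t = f \<cdot> k"
      using comp_assoc[OF t(1) \<sigma> \<pi>] comp_assoc[OF covering_in_hom[OF G[OF f] k] \<rho>(1)[OF f] \<pi>]
        t(2) \<rho>(2)[OF f] by simp
    then show ?thesis
      using t(1) \<pi>\<sigma> by (auto simp: hom_def)
  qed
  moreover have "cod C (\<pi> \<cdot> \<sigma>) = cod C \<pi>" "\<pi> \<cdot> \<sigma> \<in> Mor C"
    using \<pi>\<sigma> by (simp_all add: hom_def)
  ultimately show ?thesis
    using locally_split_if_locally_factors[of "\<pi> \<cdot> \<sigma>" F G] F G by simp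
qed

lemma Uni_comp:
  assumes F: "F \<in> Uni C T X" and G: "\<forall>f\<in>F. G f \<in> Uni C T (dom C f)"
  shows "{f \<cdot> h | f h. f \<in> F \<and> h \<in> G f} \<in> Uni C T X"
proof -
  obtain \<pi> where \<pi>: "F = {\<pi>}" "cod C \<pi> = X" "universal C \<pi>" "locally_split C T \<pi>"
    using F by (rule in_UniE)
  have "G \<pi> \<in> Uni C T (dom C \<pi>)"
    using G \<pi>(1) by simp
  then obtain \<sigma> where \<sigma>: "G \<pi> = {\<sigma>}" "cod C \<sigma> = dom C \<pi>" "universal C \<sigma>" "locally_split C T \<sigma>"
    by (rule in_UniE)
  have "cod C (\<pi> \<cdot> \<sigma>) = X"
    using comp_in_hom[of \<sigma> "dom C \<sigma>" "dom C \<pi>" \<pi> X] \<pi> \<sigma> by (simp add: universal_def hom_def)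
  then show ?thesis
    using universal_comp[OF \<pi>(3) \<sigma>(3,2)] locally_split_comp[OF \<pi>(4) \<sigma>(4,2)] \<pi>(1) \<sigma>(1) by simp
qed

lemma Uni_pullback:
  assumes F: "F \<in> Uni C T X" and g: "g \<in> Mor C" "cod C g = X"
  shows "(\<forall>f\<in>F. has_pullback C f g) \<and>
    (\<forall>p q. (\<forall>f\<in>F. is_pullback C f g (p f) (q f)) \<longrightarrow> p ` F \<in> Uni C T (dom C g))"
proof -
  obtain \<pi> where \<pi>: "F = {\<pi>}" "cod C \<pi> = X" "universal C \<pi>" "locally_split C T \<pi>"
    using F by (rule in_UniE)
  have "p ` F \<in> Uni C T (dom C g)" if pb: "is_pullback C \<pi> g (p \<pi>) (q \<pi>)" for p q
  proof -
    have "cod C (p \<pi>) = dom C g"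
      using pullback_square(3)[OF pb] by (simp add: hom_def)
    then show ?thesis
      using universal_pullback[OF \<pi>(3) pb] locally_split_pullback[OF \<pi>(4) pb] \<pi>(1) by simp
  qed
  moreover have "has_pullback C \<pi> g"
    using \<pi> g unfolding universal_def by simp
  ultimately show ?thesis
    using \<pi>(1) by simp
qed

lemma is_topology_Uni: "is_topology C (Uni C T)"
  unfolding is_topology_def
proof (intro conjI allI impI)
  show "X \<in> Obj C" "\<forall>f\<in>F. f \<in> Mor C \<and> cod C f = X" if "F \<in> Uni C T X" for X F
    using Uni_covering_morphisms[OF that] by simp_all
  show "{f} \<in> Uni C T (cod C f)" if "is_iso C f" for f
    using singleton_covering_in_Uni[OF iso_covering[OF that]] .
  show "{f \<cdot> h | f h. f \<in> F \<and> h \<in> G f} \<in> Uni C T X"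
    if "F \<in> Uni C T X" "\<forall>f\<in>F. G f \<in> Uni C T (dom C f)" for X F G
    using Uni_comp[OF that] .
  show "\<forall>f\<in>F. has_pullback C f g" if "F \<in> Uni C T X" "g \<in> Mor C" "cod C g = X" for X F g
    using Uni_pullback[OF that] by blast
  show "p ` F \<in> Uni C T (dom C g)"
    if "F \<in> Uni C T X" "g \<in> Mor C" "cod C g = X" "\<forall>f\<in>F. is_pullback C f g (p f) (q f)"
    for X F g p q
    using Uni_pullback[OF that(1-3)] that(4) by blast
qed

end

theorem mainTheorem8:
  fixes C :: "('o, 'm) category" and T T1 T2 :: "('o, 'm) coverage"
  assumes "is_category C" and "is_topology C T"
    and "is_topology C T1" and "is_topology C T2"
  shows "(is_topology C (Uni C T) \<and> singleton_cov (Uni C T) \<and> top_equiv C (Uni C T) T)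
    \<and> (top_prec C T1 T2 \<longleftrightarrow> top_subset (Uni C T1) (Uni C T2))
    \<and> (top_equiv C T1 T2 \<longleftrightarrow> Uni C T1 = Uni C T2)
    \<and> (singleton_cov T \<longrightarrow> top_subset T (Uni C T))
    \<and> Uni C (Uni C T) = Uni C T"
proof -
  \<comment> \<open>Part (b) holds for arbitrary coverages \<open>T1\<close>, \<open>T2\<close>.\<close>
  interpret grothendieck_topology C T
    using assms(1,2) by unfold_locales
  have "top_equiv C (Uni C T) T"
    using Uni_Uni top_equiv_iff_Uni_eq by blast
  then show ?thesis
    using is_topology_Uni singleton_cov_Uni top_prec_iff_top_subset_Uni top_equiv_iff_Uni_eq
      top_subset_Uni_if_singleton_cov Uni_Uni by blast
qed

end
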